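(* Let $q$ be an odd prime power, $n\ge 5$, and let $M$ be an $n\times n$ matrix with entries in $\mathbb{F}_q$. Then $0\in\mathrm{Num}'_0(M)_q$.
   Context: For $M=(m_{ij})$ with entries in $\mathbb{F}_q$ and $u=(x_1,\dots,x_n)\in\mathbb{F}_q^n$, with the Hermitian form $\langle u,v\rangle=\sum_i u_i^qv_i$ one has $\langle u,u\rangle=\sum_i x_i^2$ and $\langle u,Mu\rangle=\sum_{i,j}m_{ij}x_ix_j$. $\mathrm{Num}'_0(M)_q=\{\langle u,Mu\rangle: u\in\mathbb{F}_q^n\setminus\{0\},\ \langle u,u\rangle=0\}$. *)

theory Defs
  imports "HOL-Analysis.Finite_Cartesian_Product"
begin

definition herm :: "'a::{finite,field}^'n \<Rightarrow> 'a^'n \<Rightarrow> 'a" where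
  "herm u v = (\<Sum>i\<in>UNIV. (u $ i) ^ CARD('a) * v $ i)"

definition num0' :: "'a::{finite,field}^'n^'n \<Rightarrow> 'a set" where
  "num0' M = {herm u (M *v u) | u. u \<noteq> 0 \<and> herm u u = 0}"

end

theory Submission
  imports Defs "HOL-Computational_Algebra.Polynomial" "HOL-Library.FuncSet"
begin

text \<open>
  Over \<open>\<FF>\<^sub>q\<close> one has \<open>u\<^sub>i\<^sup>q = u\<^sub>i\<close>, so \<open>\<langle>u,u\<rangle>\<close> and \<open>\<langle>u,Mu\<rangle>\<close> are two quadratic
  forms in the coordinates of \<open>u\<close>. Forms whose degrees sum to \<open>4 < n\<close> have a nontrivial common
  zero by the Chevalley--Warning theorem: \<open>\<Prod>\<^sub>i (1 - f\<^sub>i\<^sup>q\<^sup>-\<^sup>1)\<close> is the indicator function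
  of the common zero set and has degree below \<open>n(q - 1)\<close>, so its sum over \<open>\<FF>\<^sub>q\<^sup>n\<close> vanishes
  (every monomial of such degree has some exponent below \<open>q - 1\<close>, and \<open>\<Sum>\<^sub>t t\<^sup>k = 0\<close> for
  \<open>k < q - 1\<close>). Hence the number of common zeros is divisible by the characteristic,
  and the trivial zero cannot be the only one.
\<close>

lemma card_UNIV_field_ge_2: "CARD('a::{finite,field}) \<ge> 2"
proof -
  have "card {0::'a, 1} \<le> CARD('a)" by (intro card_mono) auto
  then show ?thesis by simp
qed

lemma of_nat_CARD_eq_0: "of_nat CARD('a) = (0::'a::{finite,field})"
proof -
  have "bij (\<lambda>t::'a. t + 1)" by (rule bijI') (auto, metis diff_add_cancel)
  from sum.reindex_bij_betw[OF this, of "\<lambda>t. t"]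
  have "(\<Sum>t\<in>(UNIV::'a set). t + 1) = (\<Sum>t\<in>UNIV. t)" by simp
  then show ?thesis by (simp add: sum.distrib)
qed

lemma field_power_CARD_minus_1:
  fixes x :: "'a::{finite,field}"
  assumes "x \<noteq> 0"
  shows "x ^ (CARD('a) - 1) = 1"
proof -
  let ?S = "UNIV - {0::'a}"
  have "bij_betw (\<lambda>y. x * y) ?S ?S"
    using assms by (intro bij_betwI[where g="\<lambda>y. y / x"]) auto
  then have "(\<Prod>y\<in>?S. y) = x ^ card ?S * (\<Prod>y\<in>?S. y)"
    using prod.reindex_bij_betw[of "\<lambda>y. x * y" ?S ?S "\<lambda>y. y"] by (simp add: prod.distrib)
  moreover have "(\<Prod>y\<in>?S. y) \<noteq> 0" by (simp add: prod_zero_iff)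
  moreover have "card ?S = CARD('a) - 1" by (simp add: card_Diff_subset)
  ultimately show ?thesis by (metis mult_cancel_right1)
qed

lemma field_power_CARD: "x ^ CARD('a) = (x::'a::{finite,field})"
proof (cases "x = 0")
  case True
  then show ?thesis using card_UNIV_field_ge_2[where 'a='a] by simp
next
  case False
  have "x ^ CARD('a) = x ^ (CARD('a) - 1) * x"
    using card_UNIV_field_ge_2[where 'a='a] by (simp flip: power_Suc2)
  then show ?thesis using field_power_CARD_minus_1[OF False] by simp
qed

lemma one_minus_power_CARD_minus_1:
  "1 - x ^ (CARD('a) - 1) = of_bool (x = (0::'a::{finite,field}))"
  using card_UNIV_field_ge_2[where 'a='a] field_power_CARD_minus_1[of x] by auto

lemma sum_UNIV_power_eq_0:
  assumes "k < CARD('a::{finite,field}) - 1"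
  shows "(\<Sum>t\<in>(UNIV::'a set). t ^ k) = 0"
proof (cases "k = 0")
  case True
  then show ?thesis using of_nat_CARD_eq_0[where 'a='a] by simp
next
  case False
  have "\<exists>a::'a. a \<noteq> 0 \<and> a ^ k \<noteq> 1"
  proof (rule ccontr)
    define p :: "'a poly" where "p = monom 1 k + [:-1:]"
    have "degree p = k" unfolding p_def using False
      by (subst degree_add_eq_left) (auto simp: degree_monom_eq)
    then have "card {x. poly p x = 0} \<le> k"
      using card_poly_roots_bound[of p] False by fastforce
    assume "\<not> ?thesis"
    then have "UNIV - {0} \<subseteq> {x. poly p x = 0}" by (auto simp: p_def poly_monom)
    then have "card (UNIV - {0::'a}) \<le> card {x. poly p x = 0}" by (intro card_mono) auto
    with \<open>card {x. poly p x = 0} \<le> k\<close> assms show False by (simp add: card_Diff_subset)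
  qed
  then obtain a :: 'a where a: "a \<noteq> 0" "a ^ k \<noteq> 1" by blast
  have "bij (\<lambda>t. a * t)" using a by (intro bij_betwI[where g="\<lambda>y. y / a"]) auto
  then have "(\<Sum>t\<in>(UNIV::'a set). (a * t) ^ k) = (\<Sum>t\<in>UNIV. t ^ k)"
    using sum.reindex_bij_betw[of "\<lambda>t. a * t" UNIV UNIV "\<lambda>t. t ^ k"] by simp
  then have "a ^ k * (\<Sum>t\<in>(UNIV::'a set). t ^ k) = 1 * (\<Sum>t\<in>UNIV. t ^ k)"
    by (simp add: power_mult_distrib sum_distrib_left)
  then show ?thesis using a(2) by (metis mult_cancel_right)
qed

text \<open>Multivariate polynomials are represented only through the functions they induce.\<close>

definition monom_fun :: "('n::finite \<Rightarrow> nat) \<Rightarrow> ('n \<Rightarrow> 'a::comm_ring_1) \<Rightarrow> 'a" where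
  "monom_fun e x = (\<Prod>i\<in>UNIV. x i ^ e i)"

definition poly_fun :: "nat \<Rightarrow> (('n::finite \<Rightarrow> 'a::comm_ring_1) \<Rightarrow> 'a) \<Rightarrow> bool" where
  "poly_fun d f \<longleftrightarrow> (\<exists>L. (\<forall>(c, e)\<in>set L. sum e UNIV \<le> d) \<and>
       f = (\<lambda>x. \<Sum>(c, e)\<leftarrow>L. c * monom_fun e x))"

lemma monom_fun_add: "monom_fun (\<lambda>i. e i + e' i) x = monom_fun e x * monom_fun e' x"
  unfolding monom_fun_def by (simp add: power_add prod.distrib)

lemma poly_fun_const: "poly_fun d (\<lambda>x. c)"
  unfolding poly_fun_def by (rule exI[of _ "[(c, \<lambda>_. 0)]"]) (simp add: monom_fun_def)

lemma poly_fun_var: "poly_fun 1 (\<lambda>x. x i)"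
  unfolding poly_fun_def
  by (rule exI[of _ "[(1, \<lambda>j. if j = i then 1 else 0)]"])
     (auto simp: monom_fun_def if_distrib[of "power _"] prod.delta cong: if_cong)

lemma poly_fun_mono: "poly_fun d f \<Longrightarrow> d \<le> d' \<Longrightarrow> poly_fun d' f"
  unfolding poly_fun_def by fastforce

lemma poly_fun_add:
  assumes "poly_fun d f" "poly_fun d g"
  shows "poly_fun d (\<lambda>x. f x + g x)"
proof -
  obtain L1 L2 where
    "\<forall>(c, e)\<in>set L1. sum e UNIV \<le> d" "f = (\<lambda>x. \<Sum>(c, e)\<leftarrow>L1. c * monom_fun e x)"
    "\<forall>(c, e)\<in>set L2. sum e UNIV \<le> d" "g = (\<lambda>x. \<Sum>(c, e)\<leftarrow>L2. c * monom_fun e x)"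
    using assms unfolding poly_fun_def by blast
  then show ?thesis unfolding poly_fun_def by (intro exI[of _ "L1 @ L2"]) auto
qed

lemma poly_fun_uminus:
  assumes "poly_fun d f"
  shows "poly_fun d (\<lambda>x. - f x)"
proof -
  obtain L where L: "\<forall>(c, e)\<in>set L. sum e UNIV \<le> d" "f = (\<lambda>x. \<Sum>(c, e)\<leftarrow>L. c * monom_fun e x)"
    using assms unfolding poly_fun_def by blast
  let ?L = "map (\<lambda>(c, e). (- c, e)) L"
  have "(\<lambda>x. - f x) = (\<lambda>x. \<Sum>(c, e)\<leftarrow>?L. c * monom_fun e x)"
    unfolding L(2) by (rule ext, induction L) auto
  with L(1) show ?thesis unfolding poly_fun_def by (intro exI[of _ ?L]) auto
qed

lemma poly_fun_diff: "poly_fun d f \<Longrightarrow> poly_fun d g \<Longrightarrow> poly_fun d (\<lambda>x. f x - g x)"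
  using poly_fun_add[of d f "\<lambda>x. - g x"] poly_fun_uminus[of d g] by simp

lemma poly_fun_mult:
  assumes "poly_fun d f" "poly_fun d' g"
  shows "poly_fun (d + d') (\<lambda>x. f x * g x)"
proof -
  obtain L1 L2 where
    L1: "\<forall>(c, e)\<in>set L1. sum e UNIV \<le> d" "f = (\<lambda>x. \<Sum>(c, e)\<leftarrow>L1. c * monom_fun e x)" and
    L2: "\<forall>(c, e)\<in>set L2. sum e UNIV \<le> d'" "g = (\<lambda>x. \<Sum>(c, e)\<leftarrow>L2. c * monom_fun e x)"
    using assms unfolding poly_fun_def by blast
  define P where
    "P = concat (map (\<lambda>(c, e). map (\<lambda>(c', e'). (c * c', \<lambda>i. e i + e' i)) L2) L1)"
  have "\<forall>(c, e)\<in>set P. sum e UNIV \<le> d + d'"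
    using L1(1) L2(1) by (fastforce simp: P_def sum.distrib intro: add_mono)
  moreover have "f x * g x = (\<Sum>(c, e)\<leftarrow>P. c * monom_fun e x)" for x
    unfolding L1(2) L2(2) P_def
  proof (induction L1)
    case (Cons a L1)
    obtain c e where a: "a = (c, e)" by fastforce
    have "(\<Sum>(c'', e'')\<leftarrow>map (\<lambda>(c', e'). (c * c', \<lambda>i. e i + e' i)) L2. c'' * monom_fun e'' x)
        = c * monom_fun e x * (\<Sum>(c', e')\<leftarrow>L2. c' * monom_fun e' x)"
      by (simp add: sum_list_const_mult[symmetric] o_def monom_fun_add mult_ac case_prod_beta)
    with Cons a show ?case by (simp add: distrib_right)
  qed simp
  ultimately show ?thesis unfolding poly_fun_def by blast
qed

lemma poly_fun_power: "poly_fun d f \<Longrightarrow> poly_fun (k * d) (\<lambda>x. f x ^ k)"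
  by (induction k) (auto intro: poly_fun_const poly_fun_mult)

lemma poly_fun_sum:
  "finite A \<Longrightarrow> (\<And>i. i \<in> A \<Longrightarrow> poly_fun d (f i)) \<Longrightarrow> poly_fun d (\<lambda>x. \<Sum>i\<in>A. f i x)"
  by (induction A rule: finite_induct) (auto intro: poly_fun_const poly_fun_add)

lemma poly_fun_prod:
  "finite A \<Longrightarrow> (\<And>i. i \<in> A \<Longrightarrow> poly_fun (d i) (f i)) \<Longrightarrow>
    poly_fun (\<Sum>i\<in>A. d i) (\<lambda>x. \<Prod>i\<in>A. f i x)"
  by (induction A rule: finite_induct) (auto intro: poly_fun_const poly_fun_mult)

lemma poly_fun_quadratic_form: "poly_fun 2 (\<lambda>x. \<Sum>i\<in>UNIV. \<Sum>j\<in>UNIV. A i j * x i * x j)"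
proof (intro poly_fun_sum)
  fix i j
  have "poly_fun (0 + 1 + 1) (\<lambda>x. A i j * x i * x j)"
    by (intro poly_fun_mult poly_fun_const poly_fun_var)
  then show "poly_fun 2 (\<lambda>x. A i j * x i * x j)" by (simp add: numeral_2_eq_2)
qed auto

lemma sum_UNIV_monom_fun_eq_0:
  fixes e :: "'n::finite \<Rightarrow> nat"
  assumes "sum e UNIV < CARD('n) * (CARD('a::{finite,field}) - 1)"
  shows "(\<Sum>x\<in>(UNIV::('n \<Rightarrow> 'a) set). monom_fun e x) = 0"
proof -
  obtain i where i: "e i < CARD('a) - 1"
  proof (rule ccontr)
    assume "\<not> thesis"
    then have "(\<Sum>i\<in>(UNIV::'n set). CARD('a) - 1) \<le> sum e UNIV"
      by (intro sum_mono) (meson not_less that)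
    with assms show False by simp
  qed
  have "(\<Sum>x\<in>(UNIV::('n \<Rightarrow> 'a) set). monom_fun e x) = (\<Prod>i\<in>UNIV. \<Sum>t\<in>(UNIV::'a set). t ^ e i)"
    unfolding monom_fun_def
    using prod_sum_PiE[of "UNIV::'n set" "\<lambda>_. UNIV::'a set" "\<lambda>i t. t ^ e i"] by simp
  also have "\<dots> = 0" using sum_UNIV_power_eq_0[OF i] by (intro prod_zero) auto
  finally show ?thesis .
qed

lemma sum_UNIV_poly_fun_eq_0:
  fixes f :: "('n::finite \<Rightarrow> 'a::{finite,field}) \<Rightarrow> 'a"
  assumes "poly_fun d f" "d < CARD('n) * (CARD('a) - 1)"
  shows "(\<Sum>x\<in>UNIV. f x) = 0"
proof -
  obtain L where L: "\<forall>(c, e)\<in>set L. sum e UNIV \<le> d" "f = (\<lambda>x. \<Sum>(c, e)\<leftarrow>L. c * monom_fun e x)"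
    using assms(1) unfolding poly_fun_def by blast
  have "(\<Sum>x\<in>UNIV. \<Sum>(c, e)\<leftarrow>L. c * monom_fun e x) = 0"
    using L(1)
  proof (induction L)
    case (Cons a L)
    obtain c e where a: "a = (c, e)" by fastforce
    with Cons.prems assms(2) have "(\<Sum>x\<in>(UNIV::('n \<Rightarrow> 'a) set). monom_fun e x) = 0"
      by (intro sum_UNIV_monom_fun_eq_0) auto
    then have "(\<Sum>x\<in>(UNIV::('n \<Rightarrow> 'a) set). c * monom_fun e x) = 0"
      by (simp flip: sum_distrib_left)
    with Cons a show ?case by (simp add: sum.distrib)
  qed simp
  with L(2) show ?thesis by simp
qed

theorem chevalley_warning_card:
  fixes f :: "'i \<Rightarrow> ('n::finite \<Rightarrow> 'a::{finite,field}) \<Rightarrow> 'a"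
  assumes "finite I" "\<And>i. i \<in> I \<Longrightarrow> poly_fun (d i) (f i)" "(\<Sum>i\<in>I. d i) < CARD('n)"
  shows "of_nat (card {x. \<forall>i\<in>I. f i x = 0}) = (0::'a)"
proof -
  define q where "q = CARD('a)"
  have "q \<ge> 2" unfolding q_def by (rule card_UNIV_field_ge_2)
  define G where "G x = (\<Prod>i\<in>I. 1 - f i x ^ (q - 1))" for x
  have "poly_fun (\<Sum>i\<in>I. (q - 1) * d i) G"
    unfolding G_def[abs_def] using assms(1,2)
    by (intro poly_fun_prod poly_fun_diff poly_fun_const poly_fun_power)
  moreover have "(\<Sum>i\<in>I. (q - 1) * d i) < CARD('n) * (q - 1)"
    using assms(3) \<open>q \<ge> 2\<close> by (simp flip: sum_distrib_left)
  ultimately have "(\<Sum>x\<in>UNIV. G x) = 0"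
    using sum_UNIV_poly_fun_eq_0 unfolding q_def by blast
  moreover have "G x = of_bool (\<forall>i\<in>I. f i x = 0)" for x
    unfolding G_def q_def one_minus_power_CARD_minus_1 using assms(1)
    by (induction I rule: finite_induct) auto
  ultimately show ?thesis by simp
qed

corollary chevalley_warning:
  fixes f :: "'i \<Rightarrow> ('n::finite \<Rightarrow> 'a::{finite,field}) \<Rightarrow> 'a"
  assumes "finite I" "\<And>i. i \<in> I \<Longrightarrow> poly_fun (d i) (f i)" "(\<Sum>i\<in>I. d i) < CARD('n)"
    and "\<And>i. i \<in> I \<Longrightarrow> f i (\<lambda>_. 0) = 0"
  shows "\<exists>x. x \<noteq> (\<lambda>_. 0) \<and> (\<forall>i\<in>I. f i x = 0)"
proof (rule ccontr)
  assume "\<not> ?thesis"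
  with assms(4) have "{x. \<forall>i\<in>I. f i x = 0} = {\<lambda>_. 0}" by blast
  with chevalley_warning_card[OF assms(1-3)] show False by simp
qed

lemma herm_eq_sum_mult: "herm u v = (\<Sum>i\<in>UNIV. u $ i * v $ i)"
  unfolding herm_def by (simp add: field_power_CARD)

theorem corollary3:
  fixes M :: "'a::{finite,field}^'n::finite^'n"
  assumes "odd (CARD('a))"
    and "CARD('n) \<ge> 5"
  shows "0 \<in> num0' M"
proof -
  define Q where "Q b x = (\<Sum>i\<in>UNIV. \<Sum>j\<in>UNIV. (if b then of_bool (i = j) else M $ i $ j) * x i * x j)"
    for b and x :: "'n \<Rightarrow> 'a"
  have "\<exists>x. x \<noteq> (\<lambda>_. 0) \<and> (\<forall>b\<in>UNIV. Q b x = 0)"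
  proof (rule chevalley_warning[where d = "\<lambda>_. 2"])
    show "(\<Sum>b\<in>(UNIV::bool set). 2) < CARD('n)" using assms(2) by simp
  qed (auto simp: Q_def poly_fun_quadratic_form)
  then obtain x where x: "x \<noteq> (\<lambda>_. 0)" "Q True x = 0" "Q False x = 0" by blast
  define u where "u = vec_lambda x"
  have "u \<noteq> 0" using x(1) by (auto simp: u_def vec_eq_iff)
  moreover have "herm u u = Q True x"
    by (simp add: herm_eq_sum_mult Q_def u_def of_bool_def if_distrib[of "\<lambda>c. c * _"] cong: if_cong)
  moreover have "herm u (M *v u) = Q False x"
    by (simp add: herm_eq_sum_mult Q_def u_def matrix_vector_mult_def sum_distrib_left mult_ac)
  ultimately show ?thesis using x(2,3) unfolding num0'_def by auto
qed

end
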